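(* Let $\mu$ be a self-similar measure whose underlying attractor is a missing digit Cantor set. Then $\dim_{\ell^1}\mu=\dim^{\star}_{\ell^1}\mu$. The same holds when the attractor is a shifted missing digit Cantor set.
   Context: For $b\ge3$ and $D\subset\{0,\dots,b-1\}$ with $\#D\ge2$, the missing digit Cantor set $K_{b,D}$ is the attractor of the iterated function system $\{f_i(x)=\frac{x+i}{b}: i\in D\}$; for $x_0\in\mathbb{R}$ the shifted set $K_{b,D}+x_0$ is the attractor of $\{f_i(x)=\frac{x+i}{b}+x_0(1-\frac1b):i\in D\}$. A self-similar measure with such an attractor is the unique Borel probability measure $\mu$ with $\mu=\sum_{i\in D}p_i(f_i)_*\mu$ for a probability vector $(p_i)_{i\in D}$. $\widehat\mu(\xi)=\int e(\xi x)d\mu(x)$, $e(z)=\exp(2\pi iz)$; $\dim_{\ell^1}\mu=1-\inf\{s:\lim_{X\to\infty}X^{-s}\sum_{m\in\mathbb{Z},|m|\le X}|\widehat\mu(m)|=0\}$ and $\dim^{\star}_{\ell^1}\mu=1-\inf\{s:\lim_{X\to\infty}X^{-s}\sup_{0\le\theta\le1}\sum_{m\in\mathbb{Z},|m|\le X}|\widehat\mu(m+\theta)|=0\}$. *)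

theory Defs
  imports "HOL-Probability.Probability"
begin

text \<open>Maps of the (possibly shifted) missing digit IFS:
  f_i(x) = (x + i)/b + x0 (1 - 1/b).\<close>
definition mdmap :: "nat \<Rightarrow> real \<Rightarrow> nat \<Rightarrow> real \<Rightarrow> real" where
  "mdmap b x0 i x = (x + real i) / real b + x0 * (1 - 1 / real b)"

definition self_similar_md :: "nat \<Rightarrow> nat set \<Rightarrow> real \<Rightarrow> (nat \<Rightarrow> real) \<Rightarrow> real measure \<Rightarrow> bool" where
  "self_similar_md b D x0 p \<mu> \<longleftrightarrow>
     sets \<mu> = sets borel \<and> prob_space \<mu> \<and>
     (\<forall>A\<in>sets borel. measure \<mu> A = (\<Sum>i\<in>D. p i * measure \<mu> (mdmap b x0 i -` A)))"

definition fourier :: "real measure \<Rightarrow> real \<Rightarrow> complex" where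
  "fourier \<mu> \<xi> = (\<integral>x. cis (2 * pi * \<xi> * x) \<partial>\<mu>)"

definition l1sum :: "real measure \<Rightarrow> real \<Rightarrow> real \<Rightarrow> real" where
  "l1sum \<mu> \<theta> X = (\<Sum>m\<in>{m::int. \<bar>real_of_int m\<bar> \<le> X}. cmod (fourier \<mu> (real_of_int m + \<theta>)))"

definition dim_l1 :: "real measure \<Rightarrow> real" where
  "dim_l1 \<mu> = 1 - Inf {s::real. ((\<lambda>X. X powr (-s) * l1sum \<mu> 0 X) \<longlongrightarrow> 0) at_top}"

definition dim_l1_star :: "real measure \<Rightarrow> real" where
  "dim_l1_star \<mu> = 1 - Inf {s::real.
     ((\<lambda>X. X powr (-s) * (SUP \<theta>\<in>{0..1}. l1sum \<mu> \<theta> X)) \<longlongrightarrow> 0) at_top}"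

end

theory Submission
  imports Defs "HOL-Library.Real_Mod" "HOL-Real_Asymp.Real_Asymp"
begin

text \<open>
  Self-similarity gives \<mu>^(\<xi>) = e(...) P(\<xi>/b) \<mu>^(\<xi>/b) with the digit polynomial P, hence
  |\<mu>^(\<xi>)| = |W(\<xi>)| |\<mu>^(\<xi>/N)| for N = b^k, where W is a trigonometric sum with frequencies
  in N^-1 \<int>. Take N comparable to X. Interpolating W from its values at 0, ..., N - 1 by the
  Dirichlet kernel bounds the sum of |\<mu>^(m + \<theta>)| over |m| <= X by O(log N) times the sum of
  |W(r)| over r < N, uniformly in \<theta>. Conversely |W(r)| |\<mu>^(r/N + t)| = |\<mu>^(r + t N)|. Since \<mu>
  lives on [x0, x0 + 1] with an atom at no more than one endpoint, \<mu>^ vanishes on no coset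
  \<phi> + \<int>, and by compactness the sum of |\<mu>^(\<phi> + t)| over |t| <= T is at least some c > 0
  for all \<phi> in [0, 1]; hence c times the sum of |W(r)| is at most the unshifted sum up to
  (T + 1) N. So the shifted sums are dominated by O(log X) times the unshifted sums at scale O(X),
  and a logarithmic factor does not change the growth exponent.
\<close>

section \<open>Trigonometric sums and the Dirichlet kernel\<close>

definition trig_sum :: "(nat \<Rightarrow> complex) \<Rightarrow> nat \<Rightarrow> real \<Rightarrow> complex" where
  "trig_sum w N \<xi> = (\<Sum>J<N. w J * cis (2 * pi * \<xi> * real J / real N))"

definition dirichlet_kernel :: "nat \<Rightarrow> real \<Rightarrow> complex" where
  "dirichlet_kernel N t = (1 / of_nat N) * (\<Sum>J<N. cis (2 * pi * t * real J / real N))"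

lemma trig_sum_periodic:
  assumes "N > 0"
  shows "trig_sum w N (\<xi> + of_int t * real N) = trig_sum w N \<xi>"
proof -
  have "cis (2 * pi * (\<xi> + of_int t * real N) * real J / real N) = cis (2 * pi * \<xi> * real J / real N)"
    for J
  proof -
    have "2 * pi * (\<xi> + of_int t * real N) * real J / real N
        = 2 * pi * \<xi> * real J / real N + 2 * pi * of_int (t * int J)"
      using assms by (simp add: field_simps)
    then show ?thesis by (simp add: cis_mult[symmetric])
  qed
  then show ?thesis unfolding trig_sum_def by simp
qed

lemma dirichlet_kernel_periodic:
  assumes "N > 0"
  shows "dirichlet_kernel N (t + of_int j * real N) = dirichlet_kernel N t"
  using trig_sum_periodic[OF assms, of "\<lambda>_. 1"] by (simp add: dirichlet_kernel_def trig_sum_def)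

lemma sum_root_of_unity_powers_eq_0:
  fixes d :: int
  assumes "d \<noteq> 0" "\<bar>d\<bar> < int N"
  shows "(\<Sum>r<N. cis (2 * pi * real r * of_int d / real N)) = 0"
proof -
  define z where "z = cis (2 * pi * of_int d / real N)"
  have N: "real N > 0" using assms by simp
  have powers: "cis (2 * pi * real r * of_int d / real N) = z ^ r" for r
    unfolding z_def Complex.DeMoivre by (simp add: field_simps)
  have "z ^ N = cis (real N * (2 * pi * of_int d / real N))"
    unfolding z_def by (rule Complex.DeMoivre)
  also have "real N * (2 * pi * of_int d / real N) = 2 * pi * of_int d"
    using N by simp
  also have "cis \<dots> = 1" by (rule cis_multiple_2pi) simp
  finally have zN: "z ^ N = 1" .
  have "z \<noteq> 1"
  proof
    assume "z = 1"
    then obtain n :: int where "2 * pi * of_int d / real N = of_int n * (2 * pi)"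
      unfolding z_def cis_eq_1_iff by blast
    then have "of_int d = of_int n * real N" using N by (simp add: field_simps)
    then have "d = n * int N" by (metis of_int_eq_iff of_int_mult of_int_of_nat_eq)
    with assms show False by (cases "n = 0") (auto simp: abs_mult)
  qed
  then show ?thesis using zN by (simp add: powers geometric_sum)
qed

lemma trig_sum_interpolation:
  assumes "N > 0"
  shows "trig_sum w N y = (\<Sum>r<N. trig_sum w N (real r) * dirichlet_kernel N (y - real r))"
proof -
  define e where "e t = cis (2 * pi * t / real N)" for t
  have e_add: "e a * e c = e (a + c)" for a c
    unfolding e_def cis_mult by (simp add: add_divide_distrib distrib_left)
  have e_trig: "cis (2 * pi * t * real J / real N) = e (t * real J)" for t J
    unfolding e_def by (simp add: mult.assoc)
  have e_orth: "(\<Sum>r<N. e (real r * (real J - real J'))) = (if J = J' then of_nat N else 0)"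
    if "J < N" "J' < N" for J J'
    using that sum_root_of_unity_powers_eq_0[of "int J - int J'" N] unfolding e_def by (simp add: mult.assoc)
  have split: "e (real r * real J) * e ((y - real r) * real J')
      = e (y * real J') * e (real r * (real J - real J'))" for r J J'
    unfolding e_add by (rule arg_cong[where f=e]) (simp add: algebra_simps)
  have product: "(\<Sum>J<N. a J) * (c * (\<Sum>J'<N. d J')) = (\<Sum>J<N. \<Sum>J'<N. c * (a J * d J'))"
    for a d :: "nat \<Rightarrow> complex" and c
    unfolding sum_distrib_left[of c] sum_product by (simp only: mult_ac)
  have "(\<Sum>r<N. trig_sum w N (real r) * dirichlet_kernel N (y - real r))
      = (\<Sum>r<N. \<Sum>J<N. \<Sum>J'<N. w J / of_nat N * (e (y * real J') * e (real r * (real J - real J'))))"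
    unfolding trig_sum_def dirichlet_kernel_def e_trig product
    by (intro sum.cong refl) (simp only: split[symmetric] mult_ac divide_inverse mult_1_left)
  also have "\<dots> = (\<Sum>J<N. \<Sum>J'<N. w J / of_nat N * e (y * real J') * (\<Sum>r<N. e (real r * (real J - real J'))))"
    unfolding sum_distrib_left
    by (subst sum.swap, rule sum.cong[OF refl], subst sum.swap) (simp add: mult_ac)
  also have "\<dots> = (\<Sum>J<N. \<Sum>J'<N. if J = J' then w J * e (y * real J) else 0)"
    using assms by (intro sum.cong refl) (simp add: e_orth)
  also have "\<dots> = trig_sum w N y"
    by (simp add: trig_sum_def e_trig)
  finally show ?thesis ..
qed

lemma norm_cis_minus_1: "norm (cis a - 1) = 2 * \<bar>sin (a / 2)\<bar>"
proof -
  have "(norm (cis a - 1))\<^sup>2 = (cos a - 1)\<^sup>2 + (sin a)\<^sup>2"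
    by (simp add: cmod_power2)
  also have "\<dots> = 2 - 2 * cos a" by (simp add: power2_eq_square algebra_simps)
  also have "cos a = 1 - 2 * (sin (a / 2))\<^sup>2" using cos_double_sin[of "a / 2"] by simp
  finally have "(norm (cis a - 1))\<^sup>2 = (2 * \<bar>sin (a / 2)\<bar>)\<^sup>2" by (simp add: power2_eq_square)
  then show ?thesis by (rule power2_eq_imp_eq) auto
qed

lemma half_le_sin:
  fixes x :: real
  assumes "0 \<le> x" "x \<le> pi / 2"
  shows "x / 2 \<le> sin x"
proof (cases "x \<le> pi / 3")
  case True
  have "cos u - 1 / 2 \<ge> 0" if "0 \<le> u" "u \<le> x" for u
  proof -
    have "cos (pi / 3) \<le> cos u" by (rule cos_monotone_0_pi_le) (use that True in auto)
    then show ?thesis by (simp add: cos_60)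
  qed
  then have "sin 0 - 0 / 2 \<le> sin x - x / 2"
    by (intro DERIV_nonneg_imp_nondecreasing[OF assms(1)]) (auto intro!: derivative_eq_intros)
  then show ?thesis by simp
next
  case False
  have "sin (pi / 3) \<le> sin x" by (rule sin_monotone_2pi_le) (use False assms in auto)
  moreover have "sqrt 3 \<ge> 173 / 100" by (rule real_le_rsqrt) (simp add: power2_eq_square)
  moreover have "pi / 4 \<le> 79 / 100" using pi_approx by simp
  ultimately show ?thesis using assms by (simp add: sin_60)
qed

lemma norm_dirichlet_kernel_le_1:
  assumes "N > 0"
  shows "norm (dirichlet_kernel N t) \<le> 1"
proof -
  have "norm (\<Sum>J<N. cis (2 * pi * t * real J / real N)) \<le> real N"
    using norm_sum[of "\<lambda>J. cis (2 * pi * t * real J / real N)" "{..<N}"] by simp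
  then show ?thesis unfolding dirichlet_kernel_def using assms by (simp add: norm_mult norm_divide)
qed

lemma norm_dirichlet_kernel_le_inverse_sin:
  assumes "N > 0" "sin (pi * t / real N) \<noteq> 0"
  shows "norm (dirichlet_kernel N t) \<le> 1 / (real N * \<bar>sin (pi * t / real N)\<bar>)"
proof -
  define z where "z = cis (2 * pi * t / real N)"
  have powers: "cis (2 * pi * t * real J / real N) = z ^ J" for J
    unfolding z_def Complex.DeMoivre by (simp add: field_simps)
  have nz: "norm (z - 1) = 2 * \<bar>sin (pi * t / real N)\<bar>"
    unfolding z_def norm_cis_minus_1 by simp
  then have "z \<noteq> 1" using assms by auto
  then have "(\<Sum>J<N. cis (2 * pi * t * real J / real N)) = (z ^ N - 1) / (z - 1)"
    unfolding powers by (rule geometric_sum)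
  moreover have "norm (z ^ N - 1) \<le> 2"
    using norm_triangle_ineq4[of "z ^ N" 1] by (simp add: z_def norm_power)
  ultimately have "norm (\<Sum>J<N. cis (2 * pi * t * real J / real N))
      = norm (z ^ N - 1) / (2 * \<bar>sin (pi * t / real N)\<bar>)"
    by (simp add: norm_divide nz)
  also have "\<dots> \<le> 2 / (2 * \<bar>sin (pi * t / real N)\<bar>)"
    by (rule divide_right_mono) (use \<open>norm (z ^ N - 1) \<le> 2\<close> in simp_all)
  finally have "norm (\<Sum>J<N. cis (2 * pi * t * real J / real N)) \<le> 2 / (2 * \<bar>sin (pi * t / real N)\<bar>)" .
  then show ?thesis unfolding dirichlet_kernel_def using assms
    by (simp add: norm_mult norm_divide field_simps)
qed

lemma norm_dirichlet_kernel_le_inverse_distance: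
  assumes "1 \<le> t" "1 \<le> real N - t"
  shows "norm (dirichlet_kernel N t) \<le> 1 / min t (real N - t)"
proof -
  define m where "m = min t (real N - t)"
  have N: "N > 0" "real N > 0" using assms by auto
  have m: "1 \<le> m" "m \<le> real N / 2" using assms unfolding m_def min_def by auto
  have "sin (pi * t / real N) = sin (pi * m / real N)"
  proof (cases "m = t")
    case False
    then have "m = real N - t" unfolding m_def by (auto simp: min_def)
    then have "pi * m / real N = pi - pi * t / real N" using N by (simp add: field_simps flip: distrib_left)
    then show ?thesis by (simp add: sin_pi_minus)
  qed simp
  moreover have "pi * m / real N / 2 \<le> sin (pi * m / real N)"
    using m N by (intro half_le_sin) (auto simp: field_simps)
  moreover have pos: "0 < pi * m / real N / 2" using m N by simp
  ultimately have sin_ge: "pi * m / real N / 2 \<le> \<bar>sin (pi * t / real N)\<bar>" by linarith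
  have "norm (dirichlet_kernel N t) \<le> 1 / (real N * \<bar>sin (pi * t / real N)\<bar>)"
    using sin_ge pos N by (intro norm_dirichlet_kernel_le_inverse_sin) auto
  also have "\<dots> \<le> 1 / (real N * (pi * m / real N / 2))"
    using sin_ge pos N by (intro divide_left_mono mult_left_mono mult_pos_pos) auto
  also have "\<dots> = 2 / (pi * m)" using N by simp
  also have "\<dots> \<le> 1 / m" using m pi_gt3 by (simp add: field_simps)
  finally show ?thesis unfolding m_def .
qed

lemma norm_dirichlet_kernel_le:
  assumes "N \<ge> 2" "0 \<le> y" "y < 1" "n < N"
  shows "norm (dirichlet_kernel N (real n + y)) \<le> 2 / (real n + 1) + 2 / (real N - real n)"
proof -
  have pos: "0 < 2 / (real n + 1)" "0 < 2 / (real N - real n)" using assms by auto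
  have le_1: "norm (dirichlet_kernel N (real n + y)) \<le> 1"
    using assms by (intro norm_dirichlet_kernel_le_1) auto
  consider "n = 0" | "n = N - 1" | "1 \<le> n" "n + 2 \<le> N" using assms by linarith
  then show ?thesis
  proof cases
    case 1
    then have "2 / (real n + 1) = 2" by simp
    then show ?thesis using le_1 pos by linarith
  next
    case 2
    then have "2 / (real N - real n) = 2" using assms by (simp add: of_nat_diff)
    then show ?thesis using le_1 pos by linarith
  next
    case 3
    define t where "t = real n + y"
    have t: "real n \<le> t" "real N - real n - 1 \<le> real N - t" "1 \<le> real n" "1 \<le> real N - real n - 1"
      using assms 3 by (auto simp: t_def)
    have "norm (dirichlet_kernel N t) \<le> 1 / min t (real N - t)"
      using t by (intro norm_dirichlet_kernel_le_inverse_distance) auto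
    also have "\<dots> \<le> 1 / t + 1 / (real N - t)"
      using t by (auto simp: min_def)
    also have "\<dots> \<le> 1 / real n + 1 / (real N - real n - 1)"
      using t by (intro add_mono divide_left_mono) auto
    also have "\<dots> \<le> 2 / (real n + 1) + 2 / (real N - real n)"
      using t by (intro add_mono) (auto simp: field_simps)
    finally show ?thesis unfolding t_def .
  qed
qed

lemma sum_inverse_reverse_eq_harm: "(\<Sum>n<N. 1 / (real N - real n)) = harm N"
proof -
  have "(\<Sum>n<N. 1 / (real N - real n)) = (\<Sum>n<N. (\<lambda>i. 1 / (real i + 1)) (N - Suc n))"
    by (intro sum.cong refl) (auto simp: of_nat_diff)
  also have "\<dots> = (\<Sum>n<N. 1 / (real n + 1))" by (rule sum.nat_diff_reindex)
  finally show ?thesis by (simp add: harm_altdef inverse_eq_divide add.commute)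
qed

lemma sum_norm_dirichlet_kernel_le_harm:
  assumes "N \<ge> 2" "0 \<le> y" "y < 1"
  shows "(\<Sum>n<N. norm (dirichlet_kernel N (real n + y))) \<le> 4 * harm N"
proof -
  have "(\<Sum>n<N. norm (dirichlet_kernel N (real n + y)))
      \<le> (\<Sum>n<N. 2 / (real n + 1) + 2 / (real N - real n))"
    using norm_dirichlet_kernel_le[OF assms] by (intro sum_mono) auto
  also have "\<dots> = 2 * (\<Sum>n<N. 1 / (real n + 1)) + 2 * (\<Sum>n<N. 1 / (real N - real n))"
    by (simp add: sum.distrib sum_distrib_left)
  also have "\<dots> = 4 * harm N"
    unfolding sum_inverse_reverse_eq_harm by (simp add: harm_altdef inverse_eq_divide add.commute)
  finally show ?thesis .
qed

text \<open>The integers of a window of length \<open>< N\<close> are distinct modulo \<open>N\<close>, so by periodicity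
  the window sum is part of a full period sum.\<close>
lemma sum_norm_dirichlet_kernel_window_le_harm:
  assumes "N \<ge> 2" "2 * K + 1 \<le> N"
  shows "(\<Sum>m\<in>{- int K..int K}. norm (dirichlet_kernel N (of_int m + y))) \<le> 4 * harm N"
proof -
  define f where "f = y - of_int \<lfloor>y\<rfloor>"
  define r where "r m = nat ((m + \<lfloor>y\<rfloor>) mod int N)" for m
  have N: "N > 0" using assms by simp
  have f: "0 \<le> f" "f < 1" unfolding f_def by linarith+
  have "of_int m + y = (real (r m) + f) + of_int ((m + \<lfloor>y\<rfloor>) div int N) * real N" for m
  proof -
    have "real_of_int (m + \<lfloor>y\<rfloor>)
        = real_of_int ((m + \<lfloor>y\<rfloor>) mod int N) + of_int ((m + \<lfloor>y\<rfloor>) div int N) * real N"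
      by (metis mod_div_mult_eq of_int_add of_int_mult of_int_of_nat_eq)
    then show ?thesis using N unfolding r_def f_def by simp
  qed
  then have kernel_eq: "norm (dirichlet_kernel N (of_int m + y)) = norm (dirichlet_kernel N (real (r m) + f))"
    for m by (simp only: dirichlet_kernel_periodic[OF N])
  have inj: "inj_on r {- int K..int K}"
  proof (rule inj_onI)
    fix m1 m2 assume m: "m1 \<in> {- int K..int K}" "m2 \<in> {- int K..int K}" and "r m1 = r m2"
    then have "(m1 + \<lfloor>y\<rfloor>) mod int N = (m2 + \<lfloor>y\<rfloor>) mod int N"
      using N unfolding r_def by (simp add: eq_nat_nat_iff)
    then have "int N dvd m1 - m2" by (simp add: mod_eq_dvd_iff)
    moreover have "\<bar>m1 - m2\<bar> < int N" using m assms by auto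
    ultimately show "m1 = m2" by (metis dvd_imp_le_int abs_of_nat eq_iff_diff_eq_0 not_le)
  qed
  have range: "r ` {- int K..int K} \<subseteq> {..<N}"
    unfolding r_def using N by (auto simp: nat_less_iff)
  have "(\<Sum>m\<in>{- int K..int K}. norm (dirichlet_kernel N (of_int m + y)))
      = (\<Sum>n\<in>r ` {- int K..int K}. norm (dirichlet_kernel N (real n + f)))"
    unfolding kernel_eq by (rule sum.reindex[OF inj, symmetric, unfolded comp_def])
  also have "\<dots> \<le> (\<Sum>n<N. norm (dirichlet_kernel N (real n + f)))"
    by (rule sum_mono2[OF _ range]) auto
  also have "\<dots> \<le> 4 * harm N" by (rule sum_norm_dirichlet_kernel_le_harm[OF assms(1) f])
  finally show ?thesis .
qed

lemma sum_norm_trig_sum_window_le: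
  assumes "N \<ge> 2" "2 * K + 1 \<le> N"
  shows "(\<Sum>m\<in>{- int K..int K}. norm (trig_sum w N (of_int m + \<theta>)))
    \<le> 4 * harm N * (\<Sum>r<N. norm (trig_sum w N (real r)))"
proof -
  have N: "N > 0" using assms by simp
  have "(\<Sum>m\<in>{- int K..int K}. norm (trig_sum w N (of_int m + \<theta>)))
      \<le> (\<Sum>m\<in>{- int K..int K}. \<Sum>r<N.
            norm (trig_sum w N (real r)) * norm (dirichlet_kernel N (of_int m + (\<theta> - real r))))"
  proof (rule sum_mono)
    fix m :: int
    have "norm (trig_sum w N (of_int m + \<theta>))
        = norm (\<Sum>r<N. trig_sum w N (real r) * dirichlet_kernel N (of_int m + (\<theta> - real r)))"
      by (subst trig_sum_interpolation[OF N]) (simp add: add_diff_eq)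
    also have "\<dots> \<le> (\<Sum>r<N. norm (trig_sum w N (real r)) * norm (dirichlet_kernel N (of_int m + (\<theta> - real r))))"
      by (rule order_trans[OF norm_sum]) (simp add: norm_mult)
    finally show "norm (trig_sum w N (of_int m + \<theta>))
        \<le> (\<Sum>r<N. norm (trig_sum w N (real r)) * norm (dirichlet_kernel N (of_int m + (\<theta> - real r))))" .
  qed
  also have "\<dots> = (\<Sum>r<N. norm (trig_sum w N (real r))
      * (\<Sum>m\<in>{- int K..int K}. norm (dirichlet_kernel N (of_int m + (\<theta> - real r)))))"
    by (subst sum.swap) (simp add: sum_distrib_left)
  also have "\<dots> \<le> (\<Sum>r<N. norm (trig_sum w N (real r)) * (4 * harm N))"
    by (intro sum_mono mult_left_mono sum_norm_dirichlet_kernel_window_le_harm assms) auto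
  finally show ?thesis by (simp add: sum_distrib_left sum_distrib_right mult_ac)
qed

lemma sum_lessThan_mult_blocks:
  fixes f :: "nat \<Rightarrow> 'a :: comm_monoid_add"
  shows "(\<Sum>K<b * N. f K) = (\<Sum>J<N. \<Sum>i<b. f (J * b + i))"
proof -
  have "(\<Sum>K<b * N. f K) = (\<Sum>J<N. sum f {J * b..<J * b + b})"
    using sum.nat_group[of f b N] by (simp add: mult.commute)
  also have "\<dots> = (\<Sum>J<N. \<Sum>i<b. f (J * b + i))"
  proof (rule sum.cong[OF refl])
    fix J
    show "sum f {J * b..<J * b + b} = (\<Sum>i<b. f (J * b + i))"
      using sum.shift_bounds_nat_ivl[of f 0 "J * b" b] by (simp add: add.commute atLeast0LessThan)
  qed
  finally show ?thesis .
qed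

lemma trig_sum_mult_dilate:
  assumes "N > 0" "b > 0"
  shows "trig_sum w N \<xi> * trig_sum q b (\<xi> / real N)
    = trig_sum (\<lambda>K. w (K div b) * q (K mod b)) (b * N) \<xi>"
proof -
  have "trig_sum w N \<xi> * trig_sum q b (\<xi> / real N)
      = (\<Sum>J<N. \<Sum>i<b. w J * q i * cis (2 * pi * \<xi> * real (J * b + i) / real (b * N)))"
    unfolding trig_sum_def sum_product
  proof (intro sum.cong refl)
    fix J i
    have "cis (2 * pi * \<xi> * real J / real N) * cis (2 * pi * (\<xi> / real N) * real i / real b)
        = cis (2 * pi * \<xi> * real (J * b + i) / real (b * N))"
      unfolding cis_mult using assms by (simp add: field_simps)
    then show "w J * cis (2 * pi * \<xi> * real J / real N) * (q i * cis (2 * pi * (\<xi> / real N) * real i / real b))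
        = w J * q i * cis (2 * pi * \<xi> * real (J * b + i) / real (b * N))"
      by (simp add: mult_ac)
  qed
  also have "\<dots> = (\<Sum>K<b * N. w (K div b) * q (K mod b) * cis (2 * pi * \<xi> * real K / real (b * N)))"
    unfolding sum_lessThan_mult_blocks using assms by simp
  finally show ?thesis unfolding trig_sum_def .
qed

lemma harm_le_1_plus_ln: "N \<ge> 1 \<Longrightarrow> harm N \<le> 1 + ln (real N)"
  using euler_mascheroni_sequence_decreasing[of 1 N] by (simp add: harm_def)

lemma ex_power_between:
  fixes y :: real
  assumes "b \<ge> 2" "y \<ge> 1"
  obtains k where "y \<le> real b ^ k" "real b ^ k \<le> real b * y"
proof -
  have ex: "\<exists>k. y \<le> real b ^ k"
    using real_arch_pow[of "real b" y] assms(1) by (auto intro: less_imp_le)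
  define k where "k = (LEAST k. y \<le> real b ^ k)"
  have "y \<le> real b ^ k" unfolding k_def by (rule LeastI_ex[OF ex])
  moreover have "real b ^ k \<le> real b * y"
  proof (cases k)
    case 0
    then show ?thesis using assms mult_mono[of 1 "real b" 1 y] by simp
  next
    case (Suc j)
    then have "\<not> y \<le> real b ^ j" unfolding k_def by (metis Suc_n_not_le_n Least_le)
    then show ?thesis using Suc assms by simp
  qed
  ultimately show ?thesis by (rule that)
qed

lemma sum_residue_shift_le:
  fixes f :: "int \<Rightarrow> real"
  assumes "\<And>m. 0 \<le> f m"
  shows "(\<Sum>r<N. \<Sum>t\<in>{- int T..int T}. f (int r + t * int N))
    \<le> (\<Sum>m\<in>{- int ((T + 1) * N)..int ((T + 1) * N)}. f m)"
proof -
  define g where "g = (\<lambda>(r::nat, t::int). int r + t * int N)"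
  have inj: "inj_on g ({..<N} \<times> {- int T..int T})"
  proof (rule inj_onI, clarify)
    fix r1 t1 r2 t2 assume "r1 < N" "r2 < N" "g (r1, t1) = g (r2, t2)"
    then have eq: "int r1 - int r2 = (t2 - t1) * int N" and "\<bar>int r1 - int r2\<bar> < int N"
      by (auto simp: g_def algebra_simps)
    moreover have "int N \<le> \<bar>(t2 - t1) * int N\<bar>" if "t1 \<noteq> t2"
      using that by (simp add: abs_mult mult_le_cancel_right1) linarith
    ultimately have "t1 = t2" by fastforce
    with eq show "r1 = r2 \<and> t1 = t2" by simp
  qed
  have "g ` ({..<N} \<times> {- int T..int T}) \<subseteq> {- int ((T + 1) * N)..int ((T + 1) * N)}"
  proof clarify
    fix r t assume "r < N" "t \<in> {- int T..int T}"
    then have "t * int N \<le> int T * int N" "- int T * int N \<le> t * int N"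
      using mult_right_mono[of "- int T" t "int N"] mult_right_mono[of t "int T" "int N"] by auto
    moreover have "int ((T + 1) * N) = int T * int N + int N" by (simp add: algebra_simps)
    ultimately show "g (r, t) \<in> {- int ((T + 1) * N)..int ((T + 1) * N)}"
      using \<open>r < N\<close> unfolding g_def prod.case atLeastAtMost_iff by linarith
  qed
  then have "(\<Sum>m\<in>g ` ({..<N} \<times> {- int T..int T}). f m)
      \<le> (\<Sum>m\<in>{- int ((T + 1) * N)..int ((T + 1) * N)}. f m)"
    using assms by (intro sum_mono2) auto
  moreover have "(\<Sum>m\<in>g ` ({..<N} \<times> {- int T..int T}). f m)
      = (\<Sum>r<N. \<Sum>t\<in>{- int T..int T}. f (int r + t * int N))"
    using inj by (simp add: sum.reindex sum.cartesian_product g_def case_prod_unfold)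
  ultimately show ?thesis by simp
qed

lemma sum_norm_trig_sum_samples_le:
  fixes F :: "real \<Rightarrow> complex"
  assumes "N > 0"
    and factor: "\<And>\<xi>. norm (F \<xi>) = norm (trig_sum w N \<xi>) * norm (F (\<xi> / real N))"
    and lower: "\<And>\<phi>. \<phi> \<in> {0..1} \<Longrightarrow> c \<le> (\<Sum>t\<in>{- int T..int T}. norm (F (\<phi> + of_int t)))"
  shows "c * (\<Sum>r<N. norm (trig_sum w N (real r)))
    \<le> (\<Sum>m\<in>{- int ((T + 1) * N)..int ((T + 1) * N)}. norm (F (of_int m)))"
proof -
  have sample: "norm (trig_sum w N (real r)) * norm (F (real r / real N + of_int t))
      = norm (F (of_int (int r + t * int N)))" for r t
  proof -
    have "(real r + of_int t * real N) / real N = real r / real N + of_int t"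
      using assms(1) by (simp add: field_simps)
    then show ?thesis
      using factor[of "real r + of_int t * real N"] trig_sum_periodic[OF assms(1), of w "real r" t] by simp
  qed
  have "c * (\<Sum>r<N. norm (trig_sum w N (real r))) = (\<Sum>r<N. norm (trig_sum w N (real r)) * c)"
    by (simp add: sum_distrib_left mult.commute)
  also have "\<dots> \<le> (\<Sum>r<N. norm (trig_sum w N (real r))
      * (\<Sum>t\<in>{- int T..int T}. norm (F (real r / real N + of_int t))))"
    by (intro sum_mono mult_left_mono lower) auto
  also have "\<dots> = (\<Sum>r<N. \<Sum>t\<in>{- int T..int T}. norm (F (of_int (int r + t * int N))))"
    by (simp add: sum_distrib_left sample)
  also have "\<dots> \<le> (\<Sum>m\<in>{- int ((T + 1) * N)..int ((T + 1) * N)}. norm (F (of_int m)))"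
    by (rule sum_residue_shift_le) simp
  finally show ?thesis .
qed

lemma uniform_lower_bound_shifted_sums:
  fixes F :: "real \<Rightarrow> 'a :: real_normed_vector"
  assumes cont: "continuous_on UNIV F" and nonzero: "\<And>\<phi>. \<exists>t::int. F (\<phi> + of_int t) \<noteq> 0"
  shows "\<exists>T c. c > 0 \<and> (\<forall>\<phi>\<in>{0..1}. c \<le> (\<Sum>t\<in>{- int T..int T}. norm (F (\<phi> + of_int t))))"
proof -
  define G where "G T \<phi> = (\<Sum>t\<in>{- int T..int T}. norm (F (\<phi> + of_int t)))" for T :: nat and \<phi>
  have G_cont: "continuous_on UNIV (G T)" for T
    unfolding G_def by (intro continuous_intros continuous_on_compose2[OF cont]) auto
  have G_mono: "G T \<phi> \<le> G T' \<phi>" if "T \<le> T'" for T T' \<phi>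
    unfolding G_def by (rule sum_mono2) (use that in auto)
  have cover: "{0..1} \<subseteq> (\<Union>T. {\<phi>. 0 < G T \<phi>})"
  proof
    fix \<phi> :: real
    obtain t :: int where "F (\<phi> + of_int t) \<noteq> 0" using nonzero by blast
    moreover have "norm (F (\<phi> + of_int t)) \<le> G (nat \<bar>t\<bar>) \<phi>"
      unfolding G_def by (intro member_le_sum) auto
    ultimately have "0 < G (nat \<bar>t\<bar>) \<phi>" by (meson norm_le_zero_iff not_le order.trans)
    then show "\<phi> \<in> (\<Union>T. {\<phi>. 0 < G T \<phi>})" by blast
  qed
  obtain S where S: "finite S" "{0..1} \<subseteq> (\<Union>T\<in>S. {\<phi>. 0 < G T \<phi>})"
    by (rule compactE_image[OF compact_Icc _ cover]) (auto intro: open_Collect_less G_cont)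
  have pos: "0 < G (Max S) \<phi>" if \<phi>: "\<phi> \<in> {0..1}" for \<phi>
  proof -
    obtain T where "T \<in> S" "0 < G T \<phi>" using S(2) \<phi> by blast
    then show ?thesis using G_mono[of T "Max S" \<phi>] S(1) by simp
  qed
  obtain \<phi>\<^sub>0 where "\<phi>\<^sub>0 \<in> {0..1}" "\<forall>\<phi>\<in>{0..1}. G (Max S) \<phi>\<^sub>0 \<le> G (Max S) \<phi>"
    using continuous_attains_inf[OF compact_Icc _ continuous_on_subset[OF G_cont[of "Max S"]], of 0 1]
    by auto
  with pos show ?thesis unfolding G_def by blast
qed

section \<open>Growth exponents\<close>

definition growth_exponents :: "(real \<Rightarrow> real) \<Rightarrow> real set" where
  "growth_exponents f = {s. ((\<lambda>X. X powr (- s) * f X) \<longlongrightarrow> 0) at_top}"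

lemma growth_exponents_pos:
  assumes "eventually (\<lambda>X. 1 \<le> f X) at_top" and "s \<in> growth_exponents f"
  shows "s > 0"
proof (rule ccontr)
  assume "\<not> s > 0"
  have "((\<lambda>X. X powr (- s) * f X) \<longlongrightarrow> 0) at_top"
    using assms(2) unfolding growth_exponents_def by simp
  from order_tendstoD(2)[OF this, of 1]
  have "eventually (\<lambda>X. X powr (- s) * f X < 1) at_top" by simp
  moreover have "eventually (\<lambda>X. 1 \<le> X powr (- s) * f X) at_top"
    using assms(1) eventually_ge_at_top[of 1]
  proof eventually_elim
    case (elim X)
    have "1 \<le> X powr (- s)" using elim(2) \<open>\<not> s > 0\<close> by (intro ge_one_powr_ge_zero) simp_all
    then show ?case using elim(1) mult_mono[of 1 "X powr (- s)" 1 "f X"] by simp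
  qed
  ultimately have "eventually (\<lambda>X::real. False) at_top" by eventually_elim simp
  then show False by simp
qed

lemma growth_exponents_antimono:
  assumes "eventually (\<lambda>X. 0 \<le> f X) at_top" "eventually (\<lambda>X. f X \<le> g X) at_top"
  shows "growth_exponents g \<subseteq> growth_exponents f"
proof
  fix s assume "s \<in> growth_exponents g"
  then have lim: "((\<lambda>X. X powr (- s) * g X) \<longlongrightarrow> 0) at_top" unfolding growth_exponents_def by simp
  have "((\<lambda>X. X powr (- s) * f X) \<longlongrightarrow> 0) at_top"
  proof (rule tendsto_sandwich[OF _ _ tendsto_const lim])
    show "eventually (\<lambda>X. 0 \<le> X powr (- s) * f X) at_top"
      using assms(1) by eventually_elim simp
    show "eventually (\<lambda>X. X powr (- s) * f X \<le> X powr (- s) * g X) at_top"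
      using assms(2) by eventually_elim (simp add: mult_left_mono)
  qed
  then show "s \<in> growth_exponents f" unfolding growth_exponents_def by simp
qed

lemma growth_exponents_log_rescale:
  assumes "s \<in> growth_exponents f" "e > 0" "K > 0"
    and "eventually (\<lambda>X. 0 \<le> g X) at_top"
    and "eventually (\<lambda>X. g X \<le> C * (1 + ln X) * f (K * X)) at_top"
  shows "s + e \<in> growth_exponents g"
proof -
  have "((\<lambda>X. X powr (- s) * f X) \<longlongrightarrow> 0) at_top"
    using assms(1) unfolding growth_exponents_def by simp
  moreover have "filterlim (\<lambda>X. K * X) at_top at_top"
    by (rule filterlim_tendsto_pos_mult_at_top[OF tendsto_const \<open>K > 0\<close> filterlim_ident])
  ultimately have f_lim: "((\<lambda>X. (K * X) powr (- s) * f (K * X)) \<longlongrightarrow> 0) at_top"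
    by (rule filterlim_compose)
  have log_lim: "((\<lambda>X::real. X powr (- e) * (1 + ln X)) \<longlongrightarrow> 0) at_top"
    using \<open>e > 0\<close> by real_asymp
  define h where "h X = C * K powr s * (X powr (- e) * (1 + ln X)) * ((K * X) powr (- s) * f (K * X))"
    for X
  have "(h \<longlongrightarrow> C * K powr s * 0 * 0) at_top"
    unfolding h_def by (intro tendsto_mult tendsto_const log_lim f_lim)
  then have h_lim: "(h \<longlongrightarrow> 0) at_top" by simp
  have "((\<lambda>X. X powr (- (s + e)) * g X) \<longlongrightarrow> 0) at_top"
  proof (rule tendsto_sandwich[OF _ _ tendsto_const h_lim])
    show "eventually (\<lambda>X. 0 \<le> X powr (- (s + e)) * g X) at_top"
      using assms(4) by eventually_elim simp
    show "eventually (\<lambda>X. X powr (- (s + e)) * g X \<le> h X) at_top"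
      using assms(5) eventually_gt_at_top[of 0]
    proof eventually_elim
      case (elim X)
      have "X powr (- (s + e)) = X powr (- e) * X powr (- s)"
        using powr_add[of X "- e" "- s"] by (simp add: algebra_simps)
      also have "X powr (- s) = K powr s * (K * X) powr (- s)"
        using elim(2) \<open>K > 0\<close> by (simp add: powr_mult powr_minus)
      finally have "X powr (- (s + e)) * (C * (1 + ln X) * f (K * X)) = h X"
        by (simp add: h_def mult_ac)
      then show ?case using mult_left_mono[OF elim(1), of "X powr (- (s + e))"] by simp
    qed
  qed
  then show ?thesis unfolding growth_exponents_def by simp
qed

lemma Inf_growth_exponents_eq:
  assumes f_ge_1: "eventually (\<lambda>X. 1 \<le> f X) at_top"
    and f_le_g: "eventually (\<lambda>X. f X \<le> g X) at_top"
    and g_le: "eventually (\<lambda>X. g X \<le> C * (1 + ln X) * f (K * X)) at_top"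
    and "K > 0" and nonempty: "growth_exponents f \<noteq> {}"
  shows "Inf (growth_exponents f) = Inf (growth_exponents g)"
proof (rule antisym)
  have f_nonneg: "eventually (\<lambda>X. 0 \<le> f X) at_top"
    using f_ge_1 by eventually_elim simp
  have g_nonneg: "eventually (\<lambda>X. 0 \<le> g X) at_top"
    using f_ge_1 f_le_g by eventually_elim simp
  have rescale: "s + e \<in> growth_exponents g" if "s \<in> growth_exponents f" "e > 0" for s e
    using growth_exponents_log_rescale[OF that \<open>K > 0\<close> g_nonneg g_le] .
  have sub: "growth_exponents g \<subseteq> growth_exponents f"
    by (rule growth_exponents_antimono[OF f_nonneg f_le_g])
  have bdd: "bdd_below (growth_exponents f)"
    using growth_exponents_pos[OF f_ge_1] by (intro bdd_belowI[where m = 0]) (simp add: less_imp_le)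
  then have bdd_g: "bdd_below (growth_exponents g)" using sub by (rule bdd_below_mono)
  obtain s where "s \<in> growth_exponents f" using nonempty by blast
  then have "growth_exponents g \<noteq> {}" using rescale[of s 1] by auto
  then show "Inf (growth_exponents f) \<le> Inf (growth_exponents g)"
    by (rule cInf_superset_mono[OF _ bdd sub])
  show "Inf (growth_exponents g) \<le> Inf (growth_exponents f)"
  proof (rule field_le_epsilon)
    fix e :: real assume "e > 0"
    have "Inf (growth_exponents g) - e \<le> Inf (growth_exponents f)"
    proof (rule cInf_greatest[OF nonempty])
      fix s assume "s \<in> growth_exponents f"
      then have "Inf (growth_exponents g) \<le> s + e"
        using rescale \<open>e > 0\<close> bdd_g by (simp add: cInf_lower)
      then show "Inf (growth_exponents g) - e \<le> s" by simp
    qed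
    then show "Inf (growth_exponents g) \<le> Inf (growth_exponents f) + e" by simp
  qed
qed

section \<open>Trigonometric polynomials with integer frequencies\<close>

definition int_trig_poly :: "(int \<times> complex) list \<Rightarrow> real \<Rightarrow> complex" where
  "int_trig_poly cs x = (\<Sum>(t, c)\<leftarrow>cs. c * cis (2 * pi * of_int t * x))"

lemma int_trig_poly_Nil [simp]: "int_trig_poly [] x = 0"
  by (simp add: int_trig_poly_def)

lemma int_trig_poly_Cons [simp]:
  "int_trig_poly ((t, c) # cs) x = c * cis (2 * pi * of_int t * x) + int_trig_poly cs x"
  by (simp add: int_trig_poly_def)

lemma int_trig_poly_append: "int_trig_poly (cs @ ds) x = int_trig_poly cs x + int_trig_poly ds x"
  by (simp add: int_trig_poly_def)

lemma int_trig_poly_scale: "int_trig_poly (map (\<lambda>(t, c). (t, a * c)) cs) x = a * int_trig_poly cs x"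
  by (induction cs) (auto simp: algebra_simps)

lemma int_trig_poly_mult:
  "int_trig_poly (concat (map (\<lambda>(t, c). map (\<lambda>(t', c'). (t + t', c * c')) ds) cs)) x
    = int_trig_poly cs x * int_trig_poly ds x"
proof -
  have cis_add: "cis (2 * pi * of_int (t + t') * x) = cis (2 * pi * of_int t * x) * cis (2 * pi * of_int t' * x)"
    for t t' :: int
    by (simp add: cis_mult algebra_simps)
  have shift: "int_trig_poly (map (\<lambda>(t', c'). (t + t', c * c')) ds) x
      = c * cis (2 * pi * of_int t * x) * int_trig_poly ds x" for t c
    using cis_add by (induction ds) (auto simp: algebra_simps)
  show ?thesis
    by (induction cs) (auto simp: int_trig_poly_append shift algebra_simps)
qed

lemma real_polynomial_function_circle:
  assumes "real_polynomial_function f"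
  shows "\<exists>cs. \<forall>x. complex_of_real (f (cis (2 * pi * x))) = int_trig_poly cs x"
  using assms
proof (induction rule: real_polynomial_function.induct)
  case (linear f)
  interpret bounded_linear f by (rule linear)
  define a c where "a = f 1" and "c = f \<i>"
  have f: "f z = Re z * a + Im z * c" for z
  proof -
    have "z = Re z *\<^sub>R 1 + Im z *\<^sub>R \<i>" by (simp add: complex_eq_iff)
    then have "f z = f (Re z *\<^sub>R 1 + Im z *\<^sub>R \<i>)" by simp
    then show ?thesis unfolding add scaleR a_def c_def by simp
  qed
  let ?cs = "[(1, (complex_of_real a - \<i> * complex_of_real c) / 2),
              (-1, (complex_of_real a + \<i> * complex_of_real c) / 2)]"
  have "complex_of_real (f (cis (2 * pi * x))) = int_trig_poly ?cs x" for x
    unfolding f by (simp add: complex_eq_iff algebra_simps add_divide_distrib[symmetric])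
  then show ?case by blast
next
  case (const c)
  have "complex_of_real c = int_trig_poly [(0, complex_of_real c)] x" for x by simp
  then show ?case by blast
next
  case (add f g)
  then obtain cs ds where "\<forall>x. complex_of_real (f (cis (2 * pi * x))) = int_trig_poly cs x"
    "\<forall>x. complex_of_real (g (cis (2 * pi * x))) = int_trig_poly ds x"
    by blast
  then show ?case by (intro exI[of _ "cs @ ds"]) (simp add: int_trig_poly_append)
next
  case (mult f g)
  then obtain cs ds where "\<forall>x. complex_of_real (f (cis (2 * pi * x))) = int_trig_poly cs x"
    "\<forall>x. complex_of_real (g (cis (2 * pi * x))) = int_trig_poly ds x"
    by blast
  then show ?case
    by (intro exI[of _ "concat (map (\<lambda>(t, c). map (\<lambda>(t', c'). (t + t', c * c')) ds) cs)"])
      (simp add: int_trig_poly_mult)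
qed

lemma int_trig_poly_approx:
  assumes "continuous_on (sphere 0 1) g" "e > 0"
  shows "\<exists>cs. \<forall>x. norm (g (cis (2 * pi * x)) - int_trig_poly cs x) \<le> e"
proof -
  define S where "S = sphere (0::complex) 1"
  have "compact S" "\<And>x. cis (2 * pi * x) \<in> S" by (simp_all add: S_def)
  moreover have "continuous_on S (\<lambda>z. Re (g z))" "continuous_on S (\<lambda>z. Im (g z))"
    using assms(1) unfolding S_def by (auto intro: continuous_intros)
  ultimately obtain pR pI where
    pR: "real_polynomial_function pR" "\<And>z. z \<in> S \<Longrightarrow> \<bar>Re (g z) - pR z\<bar> < e / 2" and
    pI: "real_polynomial_function pI" "\<And>z. z \<in> S \<Longrightarrow> \<bar>Im (g z) - pI z\<bar> < e / 2"
    using Stone_Weierstrass_real_polynomial_function[OF _ _ half_gt_zero[OF assms(2)]] by metis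
  obtain cs ds where
    cs: "\<And>x. complex_of_real (pR (cis (2 * pi * x))) = int_trig_poly cs x" and
    ds: "\<And>x. complex_of_real (pI (cis (2 * pi * x))) = int_trig_poly ds x"
    using real_polynomial_function_circle[OF pR(1)] real_polynomial_function_circle[OF pI(1)] by metis
  define es where "es = cs @ map (\<lambda>(t, c). (t, \<i> * c)) ds"
  have "norm (g (cis (2 * pi * x)) - int_trig_poly es x) \<le> e" for x
  proof -
    let ?z = "cis (2 * pi * x)"
    have "g ?z - int_trig_poly es x
        = complex_of_real (Re (g ?z) - pR ?z) + \<i> * complex_of_real (Im (g ?z) - pI ?z)"
      unfolding es_def int_trig_poly_append int_trig_poly_scale cs[symmetric] ds[symmetric]
      by (simp add: complex_eq_iff)
    also have "norm \<dots> \<le> \<bar>Re (g ?z) - pR ?z\<bar> + \<bar>Im (g ?z) - pI ?z\<bar>"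
      by (rule order_trans[OF norm_triangle_ineq]) (simp add: norm_mult del: of_real_diff)
    also have "\<dots> \<le> e" using pR(2) pI(2) \<open>?z \<in> S\<close> by fastforce
    finally show ?thesis .
  qed
  then show ?thesis by blast
qed

section \<open>Fourier transforms of real distributions\<close>

lemma borel_measurable_cis [measurable]: "cis \<in> borel_measurable borel"
  by (intro borel_measurable_continuous_onI continuous_on_cis continuous_on_id)

text \<open>For \<open>z = e(x)\<close> with \<open>x \<in> [a, a + 1]\<close>, the branch \<open>Arg (- z e(-a)) + \<pi> = 2\<pi> (x - a)\<close>
  recovers \<open>x\<close>, so \<open>unwind a \<phi> (e(x)) e(\<phi> x) = |e(x - a) - 1|\<close>. The jump of this branch of \<open>Arg\<close>
  sits at \<open>z = e(a)\<close>, where the factor \<open>|z e(-a) - 1|\<close> vanishes; hence \<open>unwind a \<phi>\<close> is continuous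
  on the unit circle.\<close>
definition unwind :: "real \<Rightarrow> real \<Rightarrow> complex \<Rightarrow> complex" where
  "unwind a \<phi> z = complex_of_real (norm (z * cis (- 2 * pi * a) - 1)) *
      cis (- \<phi> * (Arg (- (z * cis (- 2 * pi * a))) + pi) - 2 * pi * \<phi> * a)"

lemma continuous_on_unwind: "continuous_on (sphere 0 1) (unwind a \<phi>)"
proof (rule continuous_on_eq_continuous_within[THEN iffD2], rule ballI)
  fix z :: complex assume z: "z \<in> sphere 0 1"
  define w where "w y = y * cis (- 2 * pi * a)" for y
  show "continuous (at z within sphere 0 1) (unwind a \<phi>)"
  proof (cases "w z = 1")
    case False
    have "- w z \<notin> \<real>\<^sub>\<le>\<^sub>0"
    proof
      assume "- w z \<in> \<real>\<^sub>\<le>\<^sub>0"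
      then obtain r where r: "- w z = complex_of_real r" "r \<le> 0" by (auto simp: nonpos_Reals_def)
      then have "w z = complex_of_real (- r)" by (metis minus_minus of_real_minus)
      moreover have "norm (w z) = 1" using z by (simp add: w_def norm_mult)
      ultimately show False using False r(2) by simp
    qed
    then have "continuous (at (- w z)) Arg" by (rule continuous_at_Arg)
    then have "isCont (\<lambda>y. Arg (- w y)) z"
      unfolding w_def
      by (intro continuous_at_compose[where f = "\<lambda>y. - (y * cis (- 2 * pi * a))" and g = Arg,
            unfolded comp_def]) (auto intro!: continuous_intros)
    then have "isCont (\<lambda>y. cis (- \<phi> * (Arg (- w y) + pi) - 2 * pi * \<phi> * a)) z"
      unfolding cis_conv_exp by (intro continuous_intros)
    then have "isCont (unwind a \<phi>) z"
      unfolding unwind_def w_def[symmetric] by (intro continuous_intros) (auto simp: w_def intro!: continuous_intros)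
    then show ?thesis by (rule continuous_at_imp_continuous_at_within)
  next
    case True
    have "((\<lambda>y. norm (w y - 1)) \<longlongrightarrow> norm (w z - 1)) (at z within sphere 0 1)"
      unfolding w_def by (intro tendsto_intros)
    then have "((\<lambda>y. norm (w y - 1)) \<longlongrightarrow> 0) (at z within sphere 0 1)" using True by simp
    moreover have "\<forall>\<^sub>F y in at z within sphere 0 1. norm (unwind a \<phi> y) \<le> norm (w y - 1)"
      by (intro always_eventually allI) (simp add: unwind_def w_def norm_mult)
    ultimately have "(unwind a \<phi> \<longlongrightarrow> 0) (at z within sphere 0 1)"
      by (rule Lim_null_comparison[rotated])
    moreover have "unwind a \<phi> z = 0" unfolding unwind_def w_def[symmetric] using True by simp
    ultimately show ?thesis unfolding continuous_within by simp
  qed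
qed

lemma unwind_cis:
  assumes "a \<le> x" "x \<le> a + 1"
  shows "unwind a \<phi> (cis (2 * pi * x)) * cis (2 * pi * \<phi> * x)
    = complex_of_real (norm (cis (2 * pi * (x - a)) - 1))"
proof -
  define u where "u = x - a"
  have twist: "cis (2 * pi * x) * cis (- 2 * pi * a) = cis (2 * pi * u)"
    unfolding cis_mult u_def by (simp add: algebra_simps)
  show ?thesis
  proof (cases "cis (2 * pi * u) = 1")
    case True
    then show ?thesis unfolding unwind_def twist u_def[symmetric] by simp
  next
    case False
    then have "u \<noteq> 0" "u \<noteq> 1" by auto
    then have u: "0 < u" "u < 1" using assms by (auto simp: u_def)
    have "- cis (2 * pi * u) = cis (2 * pi * u + pi)" by (rule minus_cis)
    also have "\<dots> = cis (2 * pi * u - pi) * cis (2 * pi)" unfolding cis_mult by (simp add: algebra_simps)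
    finally have "- cis (2 * pi * u) = cis (2 * pi * u - pi)" by simp
    moreover have "Arg (cis (2 * pi * u - pi)) = 2 * pi * u - pi"
      by (rule Arg_cis) (use u in auto)
    ultimately have "Arg (- cis (2 * pi * u)) + pi = 2 * pi * u" by simp
    moreover have "cis (- \<phi> * (2 * pi * u) - 2 * pi * \<phi> * a) * cis (2 * pi * \<phi> * x) = 1"
      unfolding cis_mult u_def by (simp add: algebra_simps)
    ultimately show ?thesis unfolding unwind_def twist u_def[symmetric] by (simp add: mult.assoc)
  qed
qed

lemma int_abs_le_eq_Icc: "{m::int. \<bar>real_of_int m\<bar> \<le> X} = {- \<lfloor>X\<rfloor>..\<lfloor>X\<rfloor>}"
proof (intro set_eqI iffI)
  fix m :: int assume "m \<in> {m. \<bar>real_of_int m\<bar> \<le> X}"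
  then have "real_of_int m \<le> X" "real_of_int (- m) \<le> X" by auto
  then have "m \<le> \<lfloor>X\<rfloor>" "- m \<le> \<lfloor>X\<rfloor>" by (simp_all add: le_floor_iff del: of_int_minus)
  then show "m \<in> {- \<lfloor>X\<rfloor>..\<lfloor>X\<rfloor>}" by auto
next
  fix m :: int assume "m \<in> {- \<lfloor>X\<rfloor>..\<lfloor>X\<rfloor>}"
  then have "m \<le> \<lfloor>X\<rfloor>" "- m \<le> \<lfloor>X\<rfloor>" by auto
  then have "real_of_int m \<le> X" "real_of_int (- m) \<le> X" by (simp_all add: le_floor_iff del: of_int_minus)
  then show "m \<in> {m. \<bar>real_of_int m\<bar> \<le> X}" by auto
qed

lemma l1sum_eq_sum_Icc:
  "l1sum \<mu> \<theta> X = (\<Sum>m\<in>{- \<lfloor>X\<rfloor>..\<lfloor>X\<rfloor>}. norm (fourier \<mu> (of_int m + \<theta>)))"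
  unfolding l1sum_def int_abs_le_eq_Icc ..

lemma l1sum_nonneg: "0 \<le> l1sum \<mu> \<theta> X"
  unfolding l1sum_def by (rule sum_nonneg) simp

lemma l1sum_mono: "X \<le> Y \<Longrightarrow> l1sum \<mu> \<theta> X \<le> l1sum \<mu> \<theta> Y"
  unfolding l1sum_eq_sum_Icc by (intro sum_mono2) (auto intro: floor_mono)

context real_distribution
begin

lemma fourier_eq_char: "fourier M \<xi> = char M (2 * pi * \<xi>)"
  unfolding fourier_def char_def cis_conv_exp by simp

lemma norm_fourier_le_1: "norm (fourier M \<xi>) \<le> 1"
  unfolding fourier_eq_char by (rule cmod_char_le_1)

lemma fourier_0 [simp]: "fourier M 0 = 1"
  unfolding fourier_eq_char by (simp add: char_zero)

lemma continuous_on_fourier: "continuous_on UNIV (fourier M)"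
  unfolding fourier_eq_char[abs_def]
  by (intro continuous_at_imp_continuous_on ballI isCont_o2[OF _ isCont_char] continuous_intros)

lemma integral_int_trig_poly_cis_eq_0:
  assumes "\<And>t::int. fourier M (\<phi> + of_int t) = 0"
  shows "(\<integral>x. int_trig_poly cs x * cis (2 * pi * \<phi> * x) \<partial>M) = 0"
    and "integrable M (\<lambda>x. int_trig_poly cs x * cis (2 * pi * \<phi> * x))"
proof (induction cs)
  case (Cons tc cs)
  obtain t c where tc: "tc = (t, c)" by fastforce
  have summand: "int_trig_poly (tc # cs) x * cis (2 * pi * \<phi> * x)
      = c * cis (2 * pi * (\<phi> + of_int t) * x) + int_trig_poly cs x * cis (2 * pi * \<phi> * x)" for x
    by (simp add: tc cis_mult algebra_simps)
  have "integrable M (\<lambda>x. c * cis (2 * pi * (\<phi> + of_int t) * x))"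
    by (intro integrable_mult_right integrable_const_bound[where B = 1]) auto
  moreover have "(\<integral>x. c * cis (2 * pi * (\<phi> + of_int t) * x) \<partial>M) = 0"
    using assms[of t] by (simp add: fourier_def)
  ultimately show "(\<integral>x. int_trig_poly (tc # cs) x * cis (2 * pi * \<phi> * x) \<partial>M) = 0"
    and "integrable M (\<lambda>x. int_trig_poly (tc # cs) x * cis (2 * pi * \<phi> * x))"
    using Cons unfolding summand by simp_all
qed simp_all

lemma integral_circle_fun_cis_eq_0:
  assumes vanish: "\<And>t::int. fourier M (\<phi> + of_int t) = 0"
    and g: "continuous_on (sphere 0 1) g"
  shows "(\<integral>x. g (cis (2 * pi * x)) * cis (2 * pi * \<phi> * x) \<partial>M) = 0"
proof -
  define I where "I = (\<integral>x. g (cis (2 * pi * x)) * cis (2 * pi * \<phi> * x) \<partial>M)"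
  have circle: "cis (2 * pi * x) \<in> sphere 0 1" for x by simp
  have "bounded (g ` sphere 0 1)"
    by (intro compact_imp_bounded compact_continuous_image g compact_sphere)
  then obtain B where B: "\<And>z. z \<in> sphere 0 1 \<Longrightarrow> norm (g z) \<le> B"
    unfolding bounded_iff by blast
  have "continuous_on UNIV (\<lambda>x. g (cis (2 * pi * x)))"
    by (rule continuous_on_compose2[OF g]) (auto intro!: continuous_intros)
  then have g_meas [measurable]: "(\<lambda>x. g (cis (2 * pi * x))) \<in> borel_measurable borel"
    by (rule borel_measurable_continuous_onI)
  have G_int: "integrable M (\<lambda>x. g (cis (2 * pi * x)) * cis (2 * pi * \<phi> * x))"
    by (rule integrable_const_bound[where B = B]) (simp_all add: norm_mult B[OF circle])
  have small: "norm I \<le> e" if "e > 0" for e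
  proof -
    obtain cs where cs: "\<And>x. norm (g (cis (2 * pi * x)) - int_trig_poly cs x) \<le> e"
      using int_trig_poly_approx[OF g \<open>e > 0\<close>] by blast
    note Q = integral_int_trig_poly_cis_eq_0[OF vanish, of cs]
    have "I = I - (\<integral>x. int_trig_poly cs x * cis (2 * pi * \<phi> * x) \<partial>M)" using Q(1) by simp
    also have "\<dots> = (\<integral>x. (g (cis (2 * pi * x)) - int_trig_poly cs x) * cis (2 * pi * \<phi> * x) \<partial>M)"
      unfolding I_def left_diff_distrib by (rule Bochner_Integration.integral_diff[OF G_int Q(2), symmetric])
    also have "norm \<dots> \<le> (\<integral>x. e \<partial>M)"
    proof (rule Bochner_Integration.integral_norm_bound_integral)
      show "integrable M (\<lambda>x. (g (cis (2 * pi * x)) - int_trig_poly cs x) * cis (2 * pi * \<phi> * x))"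
        unfolding left_diff_distrib by (rule Bochner_Integration.integrable_diff[OF G_int Q(2)])
    qed (use cs in \<open>simp_all add: norm_mult\<close>)
    finally show ?thesis using prob_space by simp
  qed
  have "norm I = 0"
  proof (rule ccontr)
    assume "norm I \<noteq> 0"
    then show False using small[of "norm I / 2"] by simp
  qed
  then show ?thesis by (simp add: I_def)
qed

lemma AE_endpoints_if_fourier_vanishes:
  assumes support: "AE x in M. x \<in> {a..a + 1}"
    and vanish: "\<And>t::int. fourier M (\<phi> + of_int t) = 0"
  shows "AE x in M. x = a \<or> x = a + 1"
proof -
  define h where "h x = norm (cis (2 * pi * (x - a)) - 1)" for x
  have [measurable]: "h \<in> borel_measurable borel" unfolding h_def by measurable
  have "continuous_on UNIV (\<lambda>x. unwind a \<phi> (cis (2 * pi * x)))"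
    by (rule continuous_on_compose2[OF continuous_on_unwind]) (auto intro!: continuous_intros)
  then have [measurable]: "(\<lambda>x. unwind a \<phi> (cis (2 * pi * x))) \<in> borel_measurable borel"
    by (rule borel_measurable_continuous_onI)
  have "AE x in M. unwind a \<phi> (cis (2 * pi * x)) * cis (2 * pi * \<phi> * x) = complex_of_real (h x)"
    using support by eventually_elim (simp add: unwind_cis h_def)
  then have "(\<integral>x. unwind a \<phi> (cis (2 * pi * x)) * cis (2 * pi * \<phi> * x) \<partial>M)
      = (\<integral>x. complex_of_real (h x) \<partial>M)"
    by (intro integral_cong_AE) (auto simp: h_def)
  then have "(\<integral>x. h x \<partial>M) = 0"
    using integral_circle_fun_cis_eq_0[OF vanish continuous_on_unwind] by simp
  moreover have "integrable M h"
    using norm_triangle_ineq4[of "cis _" 1]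
    by (intro integrable_const_bound[where B = 2]) (auto simp: h_def)
  ultimately have "AE x in M. h x = 0"
    by (subst (asm) integral_nonneg_eq_0_iff_AE) (auto simp: h_def)
  then show ?thesis using support
  proof eventually_elim
    case (elim x)
    then obtain n :: int where "2 * pi * (x - a) = of_int n * (2 * pi)"
      by (auto simp: h_def cis_eq_1_iff)
    then have "x - a = of_int n" by simp
    with elim(2) have "n = 0 \<or> n = 1" by auto
    with \<open>x - a = of_int n\<close> show ?case by auto
  qed
qed

text \<open>Otherwise the measure is a point mass, whose Fourier transform has no zeros.\<close>
lemma fourier_shifts_nonzero:
  assumes support: "AE x in M. x \<in> {a..a + 1}"
    and endpoint: "measure M {a} = 0 \<or> measure M {a + 1} = 0"
  shows "\<exists>t::int. fourier M (\<phi> + of_int t) \<noteq> 0"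
proof (rule ccontr)
  assume "\<not> (\<exists>t::int. fourier M (\<phi> + of_int t) \<noteq> 0)"
  then have vanish: "fourier M (\<phi> + of_int t) = 0" for t :: int by blast
  have ends: "AE x in M. x = a \<or> x = a + 1"
    by (rule AE_endpoints_if_fourier_vanishes[OF support vanish])
  obtain c where "AE x in M. x = c"
  proof (cases "measure M {a} = 0")
    case True
    then have "AE x in M. x \<notin> {a}" by (intro AE_not_in) (simp add: emeasure_eq_measure null_sets_def)
    with ends have "AE x in M. x = a + 1" by eventually_elim auto
    then show ?thesis by (rule that)
  next
    case False
    then have "AE x in M. x \<notin> {a + 1}"
      using endpoint by (intro AE_not_in) (simp add: emeasure_eq_measure null_sets_def)
    with ends have "AE x in M. x = a" by eventually_elim auto
    then show ?thesis by (rule that)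
  qed
  then have "fourier M \<phi> = (\<integral>x. cis (2 * pi * \<phi> * c) \<partial>M)"
    unfolding fourier_def by (intro integral_cong_AE) auto
  also have "\<dots> = cis (2 * pi * \<phi> * c)" using prob_space by simp
  finally show False using vanish[of 0] by simp
qed

lemma l1sum_le: "X \<ge> 0 \<Longrightarrow> l1sum M \<theta> X \<le> 2 * X + 1"
proof -
  assume "X \<ge> 0"
  have "l1sum M \<theta> X \<le> (\<Sum>m\<in>{- \<lfloor>X\<rfloor>..\<lfloor>X\<rfloor>}. 1)"
    unfolding l1sum_eq_sum_Icc by (intro sum_mono norm_fourier_le_1)
  also have "\<dots> = 2 * of_int \<lfloor>X\<rfloor> + 1" using \<open>X \<ge> 0\<close> by simp
  also have "\<dots> \<le> 2 * X + 1" by linarith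
  finally show ?thesis .
qed

lemma l1sum_ge_1: "X \<ge> 0 \<Longrightarrow> 1 \<le> l1sum M 0 X"
  using member_le_sum[of 0 "{- \<lfloor>X\<rfloor>..\<lfloor>X\<rfloor>}" "\<lambda>m. norm (fourier M (of_int m + 0))"]
  unfolding l1sum_eq_sum_Icc by simp

lemma two_mem_growth_exponents_l1sum: "2 \<in> growth_exponents (l1sum M 0)"
proof -
  have lim: "((\<lambda>X::real. X powr (- 2) * (2 * X + 1)) \<longlongrightarrow> 0) at_top" by real_asymp
  have "((\<lambda>X. X powr (- 2) * l1sum M 0 X) \<longlongrightarrow> 0) at_top"
  proof (rule tendsto_sandwich[OF _ _ tendsto_const lim])
    show "eventually (\<lambda>X. 0 \<le> X powr (- 2) * l1sum M 0 X) at_top"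
      by (intro always_eventually allI mult_nonneg_nonneg l1sum_nonneg) simp
    show "eventually (\<lambda>X. X powr (- 2) * l1sum M 0 X \<le> X powr (- 2) * (2 * X + 1)) at_top"
      using eventually_ge_at_top[of 0] by eventually_elim (simp add: l1sum_le mult_left_mono)
  qed
  then show ?thesis unfolding growth_exponents_def by simp
qed

theorem dim_l1_eq_dim_l1_star_if_log_bound:
  assumes "K > 0"
    and bound: "\<And>X \<theta>. X \<ge> 1 \<Longrightarrow> l1sum M \<theta> X \<le> C * (1 + ln X) * l1sum M 0 (K * X)"
  shows "dim_l1 M = dim_l1_star M"
proof -
  define g where "g X = (SUP \<theta>\<in>{0..1}. l1sum M \<theta> X)" for X
  have bdd: "bdd_above ((\<lambda>\<theta>. l1sum M \<theta> X) ` {0..1})" if "X \<ge> 0" for X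
    using l1sum_le[OF that] by (intro bdd_aboveI[where M = "2 * X + 1"]) auto
  have "Inf (growth_exponents (l1sum M 0)) = Inf (growth_exponents g)"
  proof (rule Inf_growth_exponents_eq[OF _ _ _ \<open>K > 0\<close>])
    show "eventually (\<lambda>X. 1 \<le> l1sum M 0 X) at_top"
      using eventually_ge_at_top[of 0] by eventually_elim (rule l1sum_ge_1)
    show "eventually (\<lambda>X. l1sum M 0 X \<le> g X) at_top"
      using eventually_ge_at_top[of 0] by eventually_elim (auto simp: g_def intro!: cSUP_upper bdd)
    show "eventually (\<lambda>X. g X \<le> C * (1 + ln X) * l1sum M 0 (K * X)) at_top"
      using eventually_ge_at_top[of 1] by eventually_elim (auto simp: g_def intro!: cSUP_least bound)
    show "growth_exponents (l1sum M 0) \<noteq> {}"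
      using two_mem_growth_exponents_l1sum by blast
  qed
  then show ?thesis
    unfolding dim_l1_def dim_l1_star_def growth_exponents_def g_def by simp
qed

end

section \<open>Self-similar measures on missing digit sets\<close>

locale missing_digit_measure =
  fixes b :: nat and D :: "nat set" and x0 :: real and p :: "nat \<Rightarrow> real" and \<mu> :: "real measure"
  assumes base: "b \<ge> 2" and digits: "D \<subseteq> {0..b - 1}"
    and weights_nonneg: "\<forall>i\<in>D. p i \<ge> 0" and weights_sum: "(\<Sum>i\<in>D. p i) = 1"
    and self_similar: "self_similar_md b D x0 p \<mu>"
begin

sublocale real_distribution \<mu>
  using self_similar unfolding self_similar_md_def real_distribution_def real_distribution_axioms_def
  by auto

lemma finite_digits: "finite D"
  using digits finite_subset by blast

lemma measure_self_similar:
  "A \<in> sets borel \<Longrightarrow> measure \<mu> A = (\<Sum>i\<in>D. p i * measure \<mu> (mdmap b x0 i -` A))"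
  using self_similar unfolding self_similar_md_def by auto

lemma mdmap_measurable [measurable]: "mdmap b x0 i \<in> borel_measurable borel"
  unfolding mdmap_def by measurable

lemma measurable_mu: "u \<in> borel_measurable borel \<Longrightarrow> u \<in> borel_measurable \<mu>"
  by (subst measurable_cong_sets[OF events_eq_borel refl]) simp

lemma measurable_mdmap_comp:
  "u \<in> borel_measurable borel \<Longrightarrow> (\<lambda>x. u (mdmap b x0 i x)) \<in> borel_measurable \<mu>"
  by (intro measurable_mu measurable_compose[OF mdmap_measurable])

lemma nn_integral_indicator_self_similar:
  assumes "A \<in> sets borel"
  shows "(\<integral>\<^sup>+x. indicator A x \<partial>\<mu>) = (\<Sum>i\<in>D. ennreal (p i) * (\<integral>\<^sup>+x. indicator A (mdmap b x0 i x) \<partial>\<mu>))"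
proof -
  have vimage: "mdmap b x0 i -` A \<in> sets borel" for i
    using measurable_sets_borel[OF mdmap_measurable assms] by simp
  have "(\<integral>\<^sup>+x. indicator A x \<partial>\<mu>) = ennreal (\<Sum>i\<in>D. p i * measure \<mu> (mdmap b x0 i -` A))"
    using assms by (simp add: emeasure_eq_measure measure_self_similar)
  also have "\<dots> = (\<Sum>i\<in>D. ennreal (p i) * ennreal (measure \<mu> (mdmap b x0 i -` A)))"
    using weights_nonneg by (subst sum_ennreal[symmetric]) (auto simp: ennreal_mult)
  also have "\<dots> = (\<Sum>i\<in>D. ennreal (p i) * (\<integral>\<^sup>+x. indicator (mdmap b x0 i -` A) x \<partial>\<mu>))"
    using vimage by (simp add: emeasure_eq_measure)
  finally show ?thesis by (simp add: indicator_vimage[symmetric] comp_def)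
qed

lemma nn_integral_self_similar:
  fixes f :: "real \<Rightarrow> ennreal"
  assumes "f \<in> borel_measurable borel"
  shows "(\<integral>\<^sup>+x. f x \<partial>\<mu>) = (\<Sum>i\<in>D. ennreal (p i) * (\<integral>\<^sup>+x. f (mdmap b x0 i x) \<partial>\<mu>))"
  using assms
proof (induction rule: borel_measurable_induct)
  case (set A)
  then show ?case by (rule nn_integral_indicator_self_similar)
next
  case (mult u c)
  then show ?case
    by (simp add: nn_integral_cmult measurable_mu measurable_mdmap_comp sum_distrib_left ac_simps)
next
  case (add u v)
  then show ?case
    by (simp add: nn_integral_add measurable_mu measurable_mdmap_comp distrib_left sum.distrib)
next
  case (seq U)
  have inc: "incseq (\<lambda>n x. U n (mdmap b x0 i x))" for i
    using \<open>incseq U\<close> unfolding incseq_def le_fun_def by blast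
  have "(\<integral>\<^sup>+x. (SUP n. U n) x \<partial>\<mu>) = (SUP n. \<Sum>i\<in>D. ennreal (p i) * (\<integral>\<^sup>+x. U n (mdmap b x0 i x) \<partial>\<mu>))"
    unfolding SUP_apply seq.IH[symmetric]
    by (rule nn_integral_monotone_convergence_SUP) (use seq in \<open>auto intro: measurable_mu\<close>)
  also have "\<dots> = (\<Sum>i\<in>D. SUP n. ennreal (p i) * (\<integral>\<^sup>+x. U n (mdmap b x0 i x) \<partial>\<mu>))"
    by (rule ennreal_SUP_sum)
      (use inc in \<open>auto simp: incseq_def le_fun_def intro!: mult_left_mono nn_integral_mono\<close>)
  also have "\<dots> = (\<Sum>i\<in>D. ennreal (p i) * (\<integral>\<^sup>+x. (SUP n. U n) (mdmap b x0 i x) \<partial>\<mu>))"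
  proof (rule sum.cong[OF refl])
    fix i
    have "(\<integral>\<^sup>+x. (SUP n. U n) (mdmap b x0 i x) \<partial>\<mu>) = (SUP n. \<integral>\<^sup>+x. U n (mdmap b x0 i x) \<partial>\<mu>)"
      unfolding SUP_apply
      by (rule nn_integral_monotone_convergence_SUP[OF inc]) (use seq in \<open>auto intro: measurable_mdmap_comp\<close>)
    then show "(SUP n. ennreal (p i) * (\<integral>\<^sup>+x. U n (mdmap b x0 i x) \<partial>\<mu>))
        = ennreal (p i) * (\<integral>\<^sup>+x. (SUP n. U n) (mdmap b x0 i x) \<partial>\<mu>)"
      by (simp add: SUP_mult_left_ennreal)
  qed
  finally show ?case .
qed simp

lemma integral_self_similar:
  fixes g :: "real \<Rightarrow> real"
  assumes [measurable]: "g \<in> borel_measurable borel" and bound: "\<And>x. \<bar>g x\<bar> \<le> B"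
  shows "(\<integral>x. g x \<partial>\<mu>) = (\<Sum>i\<in>D. p i * (\<integral>x. g (mdmap b x0 i x) \<partial>\<mu>))"
proof -
  define h where "h x = g x + B" for x
  have h_nonneg: "h x \<ge> 0" for x using bound[of x] by (simp add: h_def)
  have [measurable]: "h \<in> borel_measurable borel" unfolding h_def by measurable
  have g_int: "integrable \<mu> g" "integrable \<mu> (\<lambda>x. g (mdmap b x0 i x))" for i
    using bound by (auto intro!: integrable_const_bound[where B = B] measurable_mu measurable_mdmap_comp)
  have h_integral: "(\<integral>x. h (mdmap b x0 i x) \<partial>\<mu>) = enn2real (\<integral>\<^sup>+x. ennreal (h (mdmap b x0 i x)) \<partial>\<mu>)" for i
    using h_nonneg by (intro integral_eq_nn_integral measurable_mdmap_comp) auto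
  have h_finite: "(\<integral>\<^sup>+x. ennreal (h (mdmap b x0 i x)) \<partial>\<mu>) < top" for i
  proof -
    have "(\<integral>\<^sup>+x. ennreal (h (mdmap b x0 i x)) \<partial>\<mu>) \<le> (\<integral>\<^sup>+x. ennreal (2 * B) \<partial>\<mu>)"
      using bound by (intro nn_integral_mono ennreal_leI) (auto simp: h_def abs_le_iff)
    also have "\<dots> < top" using emeasure_space_1 by simp
    finally show ?thesis .
  qed
  have "(\<integral>x. h x \<partial>\<mu>) = enn2real (\<integral>\<^sup>+x. ennreal (h x) \<partial>\<mu>)"
    using h_nonneg by (intro integral_eq_nn_integral measurable_mu) auto
  also have "(\<integral>\<^sup>+x. ennreal (h x) \<partial>\<mu>) = (\<Sum>i\<in>D. ennreal (p i) * (\<integral>\<^sup>+x. ennreal (h (mdmap b x0 i x)) \<partial>\<mu>))"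
    by (rule nn_integral_self_similar) measurable
  also have "enn2real \<dots> = (\<Sum>i\<in>D. p i * (\<integral>x. h (mdmap b x0 i x) \<partial>\<mu>))"
    unfolding h_integral using h_finite weights_nonneg
    by (subst enn2real_sum) (auto simp: enn2real_mult ennreal_mult_less_top)
  finally have "(\<integral>x. g x \<partial>\<mu>) + B = (\<Sum>i\<in>D. p i * (\<integral>x. g (mdmap b x0 i x) \<partial>\<mu>)) + (\<Sum>i\<in>D. p i) * B"
    using g_int prob_space unfolding h_def by (simp add: distrib_left sum.distrib sum_distrib_right)
  then show ?thesis using weights_sum by simp
qed

lemma complex_integral_self_similar:
  fixes g :: "real \<Rightarrow> complex"
  assumes [measurable]: "g \<in> borel_measurable borel" and bound: "\<And>x. norm (g x) \<le> B"
  shows "(\<integral>x. g x \<partial>\<mu>) = (\<Sum>i\<in>D. complex_of_real (p i) * (\<integral>x. g (mdmap b x0 i x) \<partial>\<mu>))"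
proof -
  have g_int: "integrable \<mu> g" "integrable \<mu> (\<lambda>x. g (mdmap b x0 i x))" for i
    using bound by (auto intro!: integrable_const_bound[where B = B] measurable_mu measurable_mdmap_comp)
  have "Re (\<integral>x. g x \<partial>\<mu>) = (\<integral>x. Re (g x) \<partial>\<mu>)" using g_int by simp
  also have "\<dots> = (\<Sum>i\<in>D. p i * (\<integral>x. Re (g (mdmap b x0 i x)) \<partial>\<mu>))"
    by (rule integral_self_similar[where B = B]) (auto intro: order_trans[OF abs_Re_le_cmod bound])
  moreover have "Im (\<integral>x. g x \<partial>\<mu>) = (\<integral>x. Im (g x) \<partial>\<mu>)" using g_int by simp
  moreover have "\<dots> = (\<Sum>i\<in>D. p i * (\<integral>x. Im (g (mdmap b x0 i x)) \<partial>\<mu>))"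
    by (rule integral_self_similar[where B = B]) (auto intro: order_trans[OF abs_Im_le_cmod bound])
  ultimately show ?thesis using g_int by (simp add: complex_eq_iff Re_sum Im_sum)
qed

definition digit_weight :: "nat \<Rightarrow> complex" where
  "digit_weight i = (if i \<in> D then complex_of_real (p i) else 0)"

lemma fourier_self_similar:
  "fourier \<mu> \<eta> = cis (2 * pi * \<eta> * x0 * (1 - 1 / real b)) * trig_sum digit_weight b \<eta> * fourier \<mu> (\<eta> / real b)"
proof -
  have b: "real b > 0" using base by simp
  have phase: "cis (2 * pi * \<eta> * mdmap b x0 i x) = cis (2 * pi * \<eta> * x0 * (1 - 1 / real b))
      * cis (2 * pi * \<eta> * real i / real b) * cis (2 * pi * (\<eta> / real b) * x)" for i x
  proof -
    have "2 * pi * \<eta> * mdmap b x0 i x = 2 * pi * \<eta> * x0 * (1 - 1 / real b)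
        + 2 * pi * \<eta> * real i / real b + 2 * pi * (\<eta> / real b) * x"
      unfolding mdmap_def using b by (simp add: field_simps)
    then show ?thesis unfolding cis_mult by simp
  qed
  have digits_sum: "trig_sum digit_weight b \<eta> = (\<Sum>i\<in>D. complex_of_real (p i) * cis (2 * pi * \<eta> * real i / real b))"
    unfolding trig_sum_def using digits base
    by (intro sum.mono_neutral_cong_right) (auto simp: digit_weight_def)
  have "fourier \<mu> \<eta> = (\<Sum>i\<in>D. complex_of_real (p i) * (\<integral>x. cis (2 * pi * \<eta> * mdmap b x0 i x) \<partial>\<mu>))"
    unfolding fourier_def by (rule complex_integral_self_similar[where B = 1]) auto
  also have "\<dots> = (\<Sum>i\<in>D. complex_of_real (p i) * (cis (2 * pi * \<eta> * x0 * (1 - 1 / real b))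
      * cis (2 * pi * \<eta> * real i / real b) * fourier \<mu> (\<eta> / real b)))"
    unfolding phase fourier_def by (simp add: mult.assoc)
  also have "\<dots> = cis (2 * pi * \<eta> * x0 * (1 - 1 / real b)) * trig_sum digit_weight b \<eta> * fourier \<mu> (\<eta> / real b)"
    unfolding digits_sum by (simp add: sum_distrib_left sum_distrib_right ac_simps)
  finally show ?thesis .
qed

text \<open>The weights \<open>w\<close> come from multiplying the digit polynomials at the scales \<open>b, ..., b^k\<close>
  with \<open>trig_sum_mult_dilate\<close>.\<close>
lemma norm_fourier_factorization:
  "\<exists>w. \<forall>\<xi>. norm (fourier \<mu> \<xi>) = norm (trig_sum w (b ^ k) \<xi>) * norm (fourier \<mu> (\<xi> / real (b ^ k)))"
proof (induction k)
  case 0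
  have "trig_sum (\<lambda>_. 1) 1 \<xi> = 1" for \<xi> by (simp add: trig_sum_def)
  then show ?case by (intro exI[of _ "\<lambda>_. 1"]) simp
next
  case (Suc k)
  define N where "N = b ^ k"
  obtain w where w: "\<And>\<xi>. norm (fourier \<mu> \<xi>) = norm (trig_sum w N \<xi>) * norm (fourier \<mu> (\<xi> / real N))"
    using Suc unfolding N_def by blast
  define w' where "w' K = w (K div b) * digit_weight (K mod b)" for K
  have "norm (fourier \<mu> \<xi>) = norm (trig_sum w' (b * N) \<xi>) * norm (fourier \<mu> (\<xi> / real (b * N)))" for \<xi>
  proof -
    have "norm (trig_sum w N \<xi>) * norm (trig_sum digit_weight b (\<xi> / real N)) = norm (trig_sum w' (b * N) \<xi>)"
      unfolding w'_def norm_mult[symmetric] using base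
      by (intro arg_cong[where f = norm] trig_sum_mult_dilate) (simp_all add: N_def)
    moreover have "norm (fourier \<mu> (\<xi> / real N))
        = norm (trig_sum digit_weight b (\<xi> / real N)) * norm (fourier \<mu> (\<xi> / real N / real b))"
      using fourier_self_similar[of "\<xi> / real N"] by (simp add: norm_mult)
    moreover have "\<xi> / real N / real b = \<xi> / real (b * N)" by simp
    ultimately show ?thesis using w[of \<xi>] by (metis mult.assoc)
  qed
  then show ?case unfolding N_def power_Suc by blast
qed

lemma mdmap_mem_neighbourhood:
  assumes "i \<in> D" "e \<ge> 0" "x \<in> {x0 - real b * e..x0 + 1 + real b * e}"
  shows "mdmap b x0 i x \<in> {x0 - e..x0 + 1 + e}"
proof -
  have b: "real b > 0" using base by simp
  have i: "real i \<le> real b - 1" using assms(1) digits base by (auto simp: of_nat_diff)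
  have "mdmap b x0 i x = x0 + (x - x0 + real i) / real b"
    unfolding mdmap_def using b by (simp add: field_simps)
  moreover have "- e \<le> (x - x0 + real i) / real b"
    using assms(3) b by (simp add: field_simps)
  moreover have "(x - x0 + real i) / real b \<le> 1 + e"
  proof -
    have "x - x0 + real i \<le> real b * (1 + e)" using assms(3) i by (simp add: algebra_simps)
    then show ?thesis using b by (simp add: field_simps)
  qed
  ultimately show ?thesis by simp
qed

lemma measure_outside_le:
  assumes "e \<ge> 0"
  shows "measure \<mu> (- {x0 - e..x0 + 1 + e}) \<le> measure \<mu> (- {x0 - real b * e..x0 + 1 + real b * e})"
proof -
  have "measure \<mu> (- {x0 - e..x0 + 1 + e}) = (\<Sum>i\<in>D. p i * measure \<mu> (mdmap b x0 i -` (- {x0 - e..x0 + 1 + e})))"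
    by (rule measure_self_similar) simp
  also have "\<dots> \<le> (\<Sum>i\<in>D. p i * measure \<mu> (- {x0 - real b * e..x0 + 1 + real b * e}))"
    using mdmap_mem_neighbourhood[OF _ assms] weights_nonneg
    by (intro sum_mono mult_left_mono finite_measure_mono) auto
  also have "\<dots> = measure \<mu> (- {x0 - real b * e..x0 + 1 + real b * e})"
    using weights_sum by (simp add: sum_distrib_right[symmetric])
  finally show ?thesis .
qed

lemma measure_outside_eq_0:
  assumes "e > 0"
  shows "measure \<mu> (- {x0 - e..x0 + 1 + e}) = 0"
proof -
  define B where "B n = - {x0 - real b ^ n * e..x0 + 1 + real b ^ n * e}" for n
  have le: "measure \<mu> (B 0) \<le> measure \<mu> (B n)" for n
  proof (induction n)
    case (Suc n)
    then show ?case
      using measure_outside_le[of "real b ^ n * e"] assms by (simp add: B_def mult.assoc)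
  qed simp
  have "decseq B"
  proof (rule decseq_SucI)
    fix n
    have "real b ^ n * e \<le> real b ^ Suc n * e" using assms base by (simp add: mult_right_mono)
    then show "B (Suc n) \<subseteq> B n" unfolding B_def by auto
  qed
  moreover have "(\<Inter>n. B n) = {}"
  proof (rule equals0I)
    fix x assume x: "x \<in> (\<Inter>n. B n)"
    obtain n where "(\<bar>x - x0\<bar> + 1) / e < real b ^ n"
      using real_arch_pow[of "real b" "(\<bar>x - x0\<bar> + 1) / e"] base by auto
    then have "\<bar>x - x0\<bar> + 1 < real b ^ n * e" using assms by (simp add: field_simps)
    then have "x \<notin> B n" unfolding B_def by auto
    with x show False by auto
  qed
  moreover have "range B \<subseteq> sets \<mu>" unfolding B_def by auto
  ultimately have "(\<lambda>n. measure \<mu> (B n)) \<longlonglongrightarrow> 0"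
    using finite_Lim_measure_decseq[of B] by simp
  then have "measure \<mu> (B 0) \<le> 0" by (rule LIMSEQ_le_const) (use le in auto)
  then have "measure \<mu> (B 0) = 0" using measure_nonneg[of \<mu> "B 0"] by linarith
  then show ?thesis by (simp add: B_def)
qed

lemma AE_mem_unit_interval: "AE x in \<mu>. x \<in> {x0..x0 + 1}"
proof (rule AE_I')
  show "(\<Union>n. - {x0 - 1 / Suc n..x0 + 1 + 1 / Suc n}) \<in> null_sets \<mu>"
    using measure_outside_eq_0 by (intro null_sets_UN) (simp add: emeasure_eq_measure null_sets_def)
  show "{x \<in> space \<mu>. x \<notin> {x0..x0 + 1}} \<subseteq> (\<Union>n. - {x0 - 1 / Suc n..x0 + 1 + 1 / Suc n})"
  proof clarify
    fix x assume "x \<notin> {x0..x0 + 1}"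
    then have "0 < max (x0 - x) (x - x0 - 1)" by auto
    then obtain n where "inverse (real (Suc n)) < max (x0 - x) (x - x0 - 1)"
      using reals_Archimedean by blast
    then have "x \<notin> {x0 - 1 / Suc n..x0 + 1 + 1 / Suc n}"
      by (auto simp: inverse_eq_divide max_def split: if_splits)
    then show "x \<in> (\<Union>n. - {x0 - 1 / Suc n..x0 + 1 + 1 / Suc n})" by blast
  qed
qed

lemma measure_singleton_far:
  assumes "y < x0 - 1 / 2 \<or> y > x0 + 1 + 1 / 2"
  shows "measure \<mu> {y} = 0"
proof -
  have "measure \<mu> {y} \<le> measure \<mu> (- {x0 - 1 / 2..x0 + 1 + 1 / 2})"
    using assms by (intro finite_measure_mono) auto
  also have "\<dots> = 0" by (rule measure_outside_eq_0) simp
  finally show ?thesis using measure_nonneg[of \<mu> "{y}"] by linarith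
qed

lemma mdmap_vimage_singleton: "mdmap b x0 i -` {y} = {real b * (y - x0) + x0 - real i}"
  using base unfolding mdmap_def by (auto simp: field_simps)

text \<open>The endpoint \<open>x0 + c\<close> is fixed by the map with digit \<open>c (b - 1)\<close>; the preimages under all
  other maps lie at distance \<open>\<ge> 1\<close> from \<open>[x0, x0 + 1]\<close>.\<close>
lemma measure_endpoint:
  assumes "c \<in> {0, 1}"
  shows "measure \<mu> {x0 + real c} = (\<Sum>i\<in>D \<inter> {c * (b - 1)}. p i) * measure \<mu> {x0 + real c}"
proof -
  have preimage: "mdmap b x0 i -` {x0 + real c} = {x0 + real (c * b) - real i}" for i
    unfolding mdmap_vimage_singleton by (simp add: algebra_simps)
  have far: "measure \<mu> {x0 + real (c * b) - real i} = 0" if "i \<in> D" "i \<noteq> c * (b - 1)" for i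
    using that assms digits base
    by (intro measure_singleton_far) (auto simp: of_nat_diff)
  have "measure \<mu> {x0 + real c} = (\<Sum>i\<in>D. p i * measure \<mu> {x0 + real (c * b) - real i})"
    using measure_self_similar[of "{x0 + real c}"] by (simp add: preimage)
  also have "\<dots> = (\<Sum>i\<in>D \<inter> {c * (b - 1)}. p i * measure \<mu> {x0 + real (c * b) - real i})"
    using far finite_digits by (intro sum.mono_neutral_right) auto
  also have "\<dots> = (\<Sum>i\<in>D \<inter> {c * (b - 1)}. p i) * measure \<mu> {x0 + real c}"
    using assms base by (auto simp: sum_distrib_right of_nat_diff)
  finally show ?thesis .
qed

text \<open>An atom at an endpoint forces the whole weight onto the digit \<open>0\<close> resp. \<open>b - 1\<close>.\<close>
lemma measure_endpoint_eq_0: "measure \<mu> {x0} = 0 \<or> measure \<mu> {x0 + 1} = 0"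
proof (rule ccontr)
  assume "\<not> ?thesis"
  then have "(\<Sum>i\<in>D \<inter> {0}. p i) = 1" "(\<Sum>i\<in>D \<inter> {b - 1}. p i) = 1"
    using measure_endpoint[of 0] measure_endpoint[of 1] by auto
  then have "0 \<in> D" "b - 1 \<in> D" "p 0 + p (b - 1) = 1 + 1" by (auto split: if_splits simp: Int_insert_right)
  moreover have "p 0 + p (b - 1) = (\<Sum>i\<in>{0, b - 1}. p i)" using base by simp
  moreover have "(\<Sum>i\<in>{0, b - 1}. p i) \<le> (\<Sum>i\<in>D. p i)"
    using \<open>0 \<in> D\<close> \<open>b - 1 \<in> D\<close> finite_digits weights_nonneg by (intro sum_mono2) auto
  ultimately show False using weights_sum by simp
qed

lemma fourier_shifts_nonzero_self_similar: "\<exists>t::int. fourier \<mu> (\<phi> + of_int t) \<noteq> 0"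
  by (rule fourier_shifts_nonzero[OF AE_mem_unit_interval measure_endpoint_eq_0])

lemma l1sum_le_harm_l1sum:
  assumes "c \<ge> 0" and c: "\<forall>\<phi>\<in>{0..1}. c \<le> (\<Sum>t\<in>{- int T..int T}. norm (fourier \<mu> (\<phi> + of_int t)))"
    and X: "X \<ge> 1" "2 * X + 1 \<le> real (b ^ k)"
  shows "c * l1sum \<mu> \<theta> X \<le> 4 * harm (b ^ k) * l1sum \<mu> 0 (real ((T + 1) * b ^ k))"
proof -
  define N where "N = b ^ k"
  obtain w where w: "\<And>\<xi>. norm (fourier \<mu> \<xi>) = norm (trig_sum w N \<xi>) * norm (fourier \<mu> (\<xi> / real N))"
    using norm_fourier_factorization[of k] unfolding N_def by blast
  define S where "S = (\<Sum>r<N. norm (trig_sum w N (real r)))"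
  have N: "N \<ge> 2" "N > 0" using X unfolding N_def by linarith+
  have "2 * nat \<lfloor>X\<rfloor> + 1 \<le> N" using X unfolding N_def by linarith
  have floor_X: "int (nat \<lfloor>X\<rfloor>) = \<lfloor>X\<rfloor>" using X by simp
  have "l1sum \<mu> \<theta> X \<le> (\<Sum>m\<in>{- int (nat \<lfloor>X\<rfloor>)..int (nat \<lfloor>X\<rfloor>)}. norm (trig_sum w N (of_int m + \<theta>)))"
    unfolding l1sum_eq_sum_Icc floor_X
  proof (rule sum_mono)
    fix m :: int
    show "norm (fourier \<mu> (of_int m + \<theta>)) \<le> norm (trig_sum w N (of_int m + \<theta>))"
      using w[of "of_int m + \<theta>"] norm_fourier_le_1[of "(of_int m + \<theta>) / real N"]
      by (simp add: mult_left_le)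
  qed
  also have "\<dots> \<le> 4 * harm N * S"
    unfolding S_def by (rule sum_norm_trig_sum_window_le[OF N(1) \<open>2 * nat \<lfloor>X\<rfloor> + 1 \<le> N\<close>])
  finally have upper: "l1sum \<mu> \<theta> X \<le> 4 * harm N * S" .
  have "c * S \<le> (\<Sum>m\<in>{- int ((T + 1) * N)..int ((T + 1) * N)}. norm (fourier \<mu> (of_int m)))"
    unfolding S_def using c by (intro sum_norm_trig_sum_samples_le[OF N(2) w]) auto
  also have "\<dots> = l1sum \<mu> 0 (real ((T + 1) * N))"
    unfolding l1sum_eq_sum_Icc floor_of_nat by simp
  finally have lower: "c * S \<le> l1sum \<mu> 0 (real ((T + 1) * N))" .
  have "c * l1sum \<mu> \<theta> X \<le> 4 * harm N * (c * S)"
    using mult_left_mono[OF upper \<open>c \<ge> 0\<close>] by (simp add: mult_ac)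
  also have "\<dots> \<le> 4 * harm N * l1sum \<mu> 0 (real ((T + 1) * N))"
    using lower harm_nonneg by (intro mult_left_mono) auto
  finally show ?thesis unfolding N_def .
qed

lemma l1sum_le_log_l1sum:
  obtains K C where "K > 0" "\<And>X \<theta>. X \<ge> 1 \<Longrightarrow> l1sum \<mu> \<theta> X \<le> C * (1 + ln X) * l1sum \<mu> 0 (K * X)"
proof -
  obtain T c where "c > 0" and c: "\<forall>\<phi>\<in>{0..1}. c \<le> (\<Sum>t\<in>{- int T..int T}. norm (fourier \<mu> (\<phi> + of_int t)))"
    using uniform_lower_bound_shifted_sums[OF continuous_on_fourier fourier_shifts_nonzero_self_similar]
    by blast
  define K where "K = 3 * real b * (real T + 1)"
  define C where "C = 4 * (1 + ln (3 * real b)) / c"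
  have "l1sum \<mu> \<theta> X \<le> C * (1 + ln X) * l1sum \<mu> 0 (K * X)" if X: "X \<ge> 1" for X \<theta>
  proof -
    obtain k where k: "2 * X + 1 \<le> real b ^ k" "real b ^ k \<le> real b * (2 * X + 1)"
      using ex_power_between[OF base, of "2 * X + 1"] X by auto
    define N where "N = b ^ k"
    have b: "real b \<ge> 2" using base by simp
    have logs: "0 \<le> ln X" "0 \<le> ln (3 * real b)" using X b by simp_all
    have N: "1 \<le> real N" "real N \<le> 3 * real b * X"
      using k X mult_left_mono[of "2 * X + 1" "3 * X" "real b"] by (auto simp: N_def)
    have "harm N \<le> 1 + ln (real N)" using N by (intro harm_le_1_plus_ln) simp
    also have "\<dots> \<le> 1 + ln (3 * real b * X)" using N by (intro add_left_mono ln_mono) auto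
    also have "\<dots> = 1 + ln (3 * real b) + ln X" using b X by (simp add: ln_mult)
    also have "\<dots> \<le> (1 + ln (3 * real b)) * (1 + ln X)"
      using logs by (simp add: algebra_simps)
    finally have harm_le: "harm N \<le> (1 + ln (3 * real b)) * (1 + ln X)" .
    have "real ((T + 1) * N) = (real T + 1) * real N" by (simp add: algebra_simps)
    also have "\<dots> \<le> (real T + 1) * (3 * real b * X)" using N by (intro mult_left_mono) auto
    also have "\<dots> = K * X" by (simp add: K_def)
    finally have scale: "l1sum \<mu> 0 (real ((T + 1) * N)) \<le> l1sum \<mu> 0 (K * X)" by (rule l1sum_mono)
    have "c * l1sum \<mu> \<theta> X \<le> 4 * harm N * l1sum \<mu> 0 (real ((T + 1) * N))"
      unfolding N_def using \<open>c > 0\<close> c X k by (intro l1sum_le_harm_l1sum) auto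
    also have "\<dots> \<le> 4 * ((1 + ln (3 * real b)) * (1 + ln X)) * l1sum \<mu> 0 (K * X)"
      using harm_le scale logs harm_nonneg l1sum_nonneg by (intro mult_mono) auto
    also have "\<dots> = c * (C * (1 + ln X) * l1sum \<mu> 0 (K * X))"
      using \<open>c > 0\<close> by (simp add: C_def)
    finally show ?thesis using \<open>c > 0\<close> by simp
  qed
  moreover have "K > 0" using base by (simp add: K_def)
  ultimately show ?thesis using that by blast
qed

end

theorem lemma5p6:
  fixes b :: nat and D :: "nat set" and x0 :: real and p :: "nat \<Rightarrow> real" and \<mu> :: "real measure"
  assumes "b \<ge> 3"
    and "D \<subseteq> {0..b-1}" and "card D \<ge> 2"
    and "\<forall>i\<in>D. p i \<ge> 0" and "(\<Sum>i\<in>D. p i) = 1"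
    and "self_similar_md b D x0 p \<mu>"
  shows "dim_l1 \<mu> = dim_l1_star \<mu>"
proof -
  interpret missing_digit_measure b D x0 p \<mu>
    using assms by unfold_locales auto
  obtain K C where "K > 0" "\<And>X \<theta>. X \<ge> 1 \<Longrightarrow> l1sum \<mu> \<theta> X \<le> C * (1 + ln X) * l1sum \<mu> 0 (K * X)"
    using l1sum_le_log_l1sum by blast
  then show ?thesis by (rule dim_l1_eq_dim_l1_star_if_log_bound)
qed

end
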